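(* Let $D$ be a document with phrase sequence $S_D=[s_1,\dots,s_n]$ and visual pattern function $p$. Let $GT=(V^*,E^* )$ be the true SHT of $D$; assume $GT$ is a candidate SHT whose root corresponds to $s_1$, and assume $GT$ is well-formatted. Assume further that the header-identification step is correct, i.e., the set of phrases retained after pruning clusters is exactly the set of phrases corresponding to the nodes of $GT$. Then the tree returned by \texttt{oracle\_gen}$(D)$ equals $GT$: it has the same node set and the same parent-child edges.
   Context: A document $D$ is represented by a sequence of phrases $S_D=[s_1,\dots,s_n]$ (maximal runs of consecutive words with identical font size, name, and type). Each phrase $s$ has a visual pattern $p(s)$, a vector of formatting features (font size, font name, font type, whether all-capitalized, whether it starts with a number, whether it starts with a letter, whether it is centered); two phrases have the same pattern iff these vectors are equal. A candidate SHT (semantic hierarchical tree) for $D$ is a single-rooted, ordered, connected directed tree $T=(V,E)$ in which each node $v$ corresponds to a distinct phrase $s_{ind(v)}\in S_D$ (its phrase index $ind(v)$), such that $ind(v)<ind(v')$ for every child $v'$ of $v$ and $ind(v)<ind(v')$ for every right sibling $v'$ of $v$ (so preorder traversal visits nodes in increasing phrase index). Write $p(v)=p(s_{ind(v)})$. For a node $v$ of a tree $T$, $next(v)$ is the phrase index of its immediate right sibling if it exists, otherwise that of the immediate right sibling of the closest ancestor having one; if no ancestor of $v$ has a right sibling, $next(v)=n$. The text span of $v$ is $ts(v)=[ind(v),\,next(v)-1]$ (a set of phrase indices). The granularity of $v$ is its depth (root has depth 1). Well-formatted: for a node $v$, the visual prefix $vispre(v)$ is the sequence of visual patterns of the nodes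 on the path from the root to $v$'s parent (e.g., a depth-3 node with ancestors of patterns $p_1,p_2$ has $vispre=p_1p_2$); for a set of nodes, $vispre$ is the set of their visual prefixes. For a pattern $q$, $pset(q)$ is the set of nodes $v$ with $p(v)=q$. An SHT is well-formatted if (1) any two sibling nodes have equal visual patterns, and (2) for every visual pattern $q$, all nodes in $pset(q)$ have the same visual prefix (i.e., $vispre(pset(q))$ is a single sequence). Procedure \texttt{oracle\_gen}$(D)$: (i) Cluster the phrases of $S_D$ by identical visual pattern; (ii) prune clusters deemed non-header (via an LLM oracle); the remaining phrases are the header phrases. (iii) Tree construction, top-down, one cluster at a time: start with the cluster containing $s_1$ (which, if it contains only $s_1$, yields the root node for $s_1$). Repeatedly pick the not-yet-processed cluster containing the phrase of smallest index. For each phrase $s_i$ in this cluster create a node $v_i$, and choose as its parent the node $v_j$ of the current partially constructed tree (before this cluster is added, with text spans computed in that tree) such that $ind(v_i)\in ts(v_j)$ and there is no other node $v_k$ with $ind(v_k)>ind(v_j)$ and $ind(v_i)\in ts(v_k)$ (the most specific containing node). All nodes of the cluster are then added simultaneously, ordered by phrase index. The output is the resulting tree. *)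

theory Defs
  imports Main
begin

(* Phrases are indexed 1..n; a tree on phrases is a pair (V, E) with
   V the set of phrase indices of its nodes and E the set of
   (parent, child) edges.  Children of a node are ordered by phrase index. *)

type_synonym ptree = "nat set \<times> (nat \<times> nat) set"

definition is_rooted_tree :: "nat set \<Rightarrow> (nat \<times> nat) set \<Rightarrow> nat \<Rightarrow> bool" where
  "is_rooted_tree V E r \<longleftrightarrow>
     finite V \<and> r \<in> V \<and> E \<subseteq> V \<times> V \<and>
     (\<forall>v\<in>V. (r, v) \<in> E\<^sup>*) \<and>
     (\<forall>v. (v, r) \<notin> E) \<and>
     (\<forall>v\<in>V - {r}. \<exists>!u. (u, v) \<in> E)"

definition candidate_SHT :: "nat \<Rightarrow> nat set \<Rightarrow> (nat \<times> nat) set \<Rightarrow> nat \<Rightarrow> bool" where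
  "candidate_SHT n V E r \<longleftrightarrow>
     V \<subseteq> {1..n} \<and> is_rooted_tree V E r \<and>
     (\<forall>(u, v)\<in>E. u < v) \<and>
     \<comment> \<open>preorder traversal visits nodes in increasing phrase index:
        every subtree occupies a contiguous block of node indices\<close>
     (\<forall>u\<in>V. \<forall>w\<in>V. \<forall>x\<in>V. (u, w) \<in> E\<^sup>* \<and> u \<le> x \<and> x \<le> w \<longrightarrow> (u, x) \<in> E\<^sup>*)"

(* visual prefix: patterns of the nodes on the root-to-parent path
   (ancestors are listed by increasing index, which is path order since parent < child) *)
definition vispre :: "(nat \<Rightarrow> 'q) \<Rightarrow> (nat \<times> nat) set \<Rightarrow> nat \<Rightarrow> 'q list" where
  "vispre p E v = map p (sorted_list_of_set {a. (a, v) \<in> E\<^sup>+})"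

definition well_formatted :: "(nat \<Rightarrow> 'q) \<Rightarrow> nat set \<Rightarrow> (nat \<times> nat) set \<Rightarrow> bool" where
  "well_formatted p V E \<longleftrightarrow>
     (\<forall>u a b. (u, a) \<in> E \<and> (u, b) \<in> E \<longrightarrow> p a = p b) \<and>
     (\<forall>a\<in>V. \<forall>b\<in>V. p a = p b \<longrightarrow> vispre p E a = vispre p E b)"

definition rsibs :: "nat set \<Rightarrow> (nat \<times> nat) set \<Rightarrow> nat \<Rightarrow> nat set" where
  "rsibs V E a = {b\<in>V. a < b \<and> (\<exists>u. (u, a) \<in> E \<and> (u, b) \<in> E)}"

definition imm_rsib :: "nat set \<Rightarrow> (nat \<times> nat) set \<Rightarrow> nat \<Rightarrow> nat" where
  "imm_rsib V E a = Min (rsibs V E a)"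

definition nxt :: "nat \<Rightarrow> nat set \<Rightarrow> (nat \<times> nat) set \<Rightarrow> nat \<Rightarrow> nat" where
  "nxt n V E v =
     (let A = {a\<in>V. (a, v) \<in> E\<^sup>* \<and> rsibs V E a \<noteq> {}}
      in if A = {} then n + 1 else imm_rsib V E (Max A))"

definition ts :: "nat \<Rightarrow> nat set \<Rightarrow> (nat \<times> nat) set \<Rightarrow> nat \<Rightarrow> nat set" where
  "ts n V E v = {v .. nxt n V E v - 1}"

(* most specific node of the current tree whose text span contains i *)
definition spec_parent :: "nat \<Rightarrow> nat set \<Rightarrow> (nat \<times> nat) set \<Rightarrow> nat \<Rightarrow> nat" where
  "spec_parent n V E i = Max {j\<in>V. i \<in> ts n V E j}"

(* one step of tree construction: R = not-yet-processed header phrases *)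
definition gen_step :: "nat \<Rightarrow> (nat \<Rightarrow> 'q) \<Rightarrow> nat set \<times> ptree \<Rightarrow> nat set \<times> ptree" where
  "gen_step n p st =
     (case st of (R, V, E) \<Rightarrow>
       if R = {} then (R, V, E) else
       (let m = Min R; C = {i\<in>R. p i = p m};
            E' = E \<union> {(spec_parent n V E i, i) | i. i \<in> C \<and> (\<exists>j\<in>V. i \<in> ts n V E j)}
        in (R - C, V \<union> C, E')))"

(* header phrases retained after pruning whole clusters; the LLM oracle
   is modelled as a predicate keep on visual patterns *)
definition header_phrases :: "nat \<Rightarrow> (nat \<Rightarrow> 'q) \<Rightarrow> ('q \<Rightarrow> bool) \<Rightarrow> nat set" where
  "header_phrases n p keep = {i\<in>{1..n}. keep (p i)}"

definition oracle_gen :: "nat \<Rightarrow> (nat \<Rightarrow> 'q) \<Rightarrow> ('q \<Rightarrow> bool) \<Rightarrow> ptree" where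
  "oracle_gen n p keep =
     (let H = header_phrases n p keep
      in snd (((gen_step n p) ^^ card H) (H, {}, {})))"

end

theory Submission imports Defs begin

text \<open>The tree is rebuilt one cluster at a time, and the processed node set V stays closed under
  parents and under equality of visual patterns. When the cluster of the smallest unprocessed
  phrase m is added, m's parent is processed (it precedes m), so by well-formatting the parents of
  all cluster members are processed as well, while none of their children is (siblings share the
  cluster's pattern). For such a member i with parent u, the text span of u in the partial tree
  extends past i, because a preorder tree puts the whole subtree of u before the next right
  sibling of u or of any of its ancestors; and no processed node after u precedes i, since it would
  lie in the subtree of u. Hence u is the most specific span containing i, and the construction
  attaches every node to its true parent.\<close>

lemma sorted_le_last: "sorted xs \<Longrightarrow> x \<in> set xs \<Longrightarrow> x \<le> last xs"
  by (induction xs) auto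

lemma last_sorted_list_of_set_eq:
  fixes S :: "'a::linorder set"
  assumes "finite S" "u \<in> S" "\<And>a. a \<in> S \<Longrightarrow> a \<le> u"
  shows "last (sorted_list_of_set S) = u"
proof -
  define xs where "xs = sorted_list_of_set S"
  have xs: "sorted xs" "set xs = S" "xs \<noteq> []"
    using assms(1,2) by (auto simp: xs_def)
  then have "u \<le> last xs" using assms(2) sorted_le_last by blast
  moreover have "last xs \<le> u" using assms(3) xs(2,3) last_in_set by blast
  ultimately show ?thesis unfolding xs_def by simp
qed

lemma imm_rsib_in_rsibs: "finite V \<Longrightarrow> rsibs V E a \<noteq> {} \<Longrightarrow> imm_rsib V E a \<in> rsibs V E a"
  unfolding imm_rsib_def rsibs_def by (rule Min_in) auto

lemma funpow_exhausts_fst: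
  fixes f :: "'a set \<times> 'b \<Rightarrow> 'a set \<times> 'b"
  assumes fixed: "\<And>s. fst s = {} \<Longrightarrow> f s = s"
    and step: "\<And>s. P s \<Longrightarrow> fst s \<noteq> {} \<Longrightarrow> P (f s) \<and> fst (f s) \<subset> fst s"
    and "P s" "finite (fst s)" "card (fst s) \<le> k"
  shows "P ((f ^^ k) s) \<and> fst ((f ^^ k) s) = {}"
  using assms(3-)
proof (induction k arbitrary: s)
  case 0
  then show ?case by simp
next
  case (Suc k)
  have "P (f s) \<and> finite (fst (f s)) \<and> card (fst (f s)) \<le> k"
  proof (cases "fst s = {}")
    case True
    then show ?thesis using fixed Suc.prems(1) by simp
  next
    case False
    then have "P (f s)" "fst (f s) \<subset> fst s" using step Suc.prems(1) by blast+
    moreover from this(2) have "card (fst (f s)) < card (fst s)"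
      using Suc.prems(2) by (rule psubset_card_mono[rotated])
    ultimately show ?thesis using Suc.prems(2,3) finite_subset by fastforce
  qed
  then show ?case using Suc.IH by (simp add: funpow_Suc_right del: funpow.simps)
qed

locale candidate_sht =
  fixes n :: nat and Vs :: "nat set" and Es :: "(nat \<times> nat) set"
  assumes candidate: "candidate_SHT n Vs Es 1"
begin

lemma finite_nodes: "finite Vs"
  and root_node: "1 \<in> Vs"
  and nodes_le: "Vs \<subseteq> {1..n}"
  and edges_subset: "Es \<subseteq> Vs \<times> Vs"
  and no_edge_to_root: "(v, 1) \<notin> Es"
  using candidate unfolding candidate_SHT_def is_rooted_tree_def by simp_all

lemma root_reaches: "v \<in> Vs \<Longrightarrow> (1, v) \<in> Es\<^sup>*"
  using candidate unfolding candidate_SHT_def is_rooted_tree_def by simp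

lemma edge_less: "(u, v) \<in> Es \<Longrightarrow> u < v"
  using candidate unfolding candidate_SHT_def by fast

lemma parent_unique_exists: "v \<in> Vs \<Longrightarrow> v \<noteq> 1 \<Longrightarrow> \<exists>!u. (u, v) \<in> Es"
  using candidate unfolding candidate_SHT_def is_rooted_tree_def by simp

lemma parent_exists: "v \<in> Vs \<Longrightarrow> v \<noteq> 1 \<Longrightarrow> \<exists>u. (u, v) \<in> Es"
  using parent_unique_exists by blast

lemma subtree_contiguous:
  "\<lbrakk>u \<in> Vs; w \<in> Vs; x \<in> Vs; (u, w) \<in> Es\<^sup>*; u \<le> x; x \<le> w\<rbrakk> \<Longrightarrow> (u, x) \<in> Es\<^sup>*"
  using candidate unfolding candidate_SHT_def by (elim conjE) blast

lemma parent_unique: "(u, v) \<in> Es \<Longrightarrow> (w, v) \<in> Es \<Longrightarrow> u = w"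
  using parent_unique_exists edges_subset no_edge_to_root by blast

lemma trancl_less: "(a, b) \<in> Es\<^sup>+ \<Longrightarrow> a < b"
  by (induction rule: trancl_induct) (auto dest: edge_less)

lemma rtrancl_le: "(a, b) \<in> Es\<^sup>* \<Longrightarrow> a \<le> b"
  by (auto simp: rtrancl_eq_or_trancl dest: trancl_less)

lemma trancl_through_parent: "(a, v) \<in> Es\<^sup>+ \<Longrightarrow> (w, v) \<in> Es \<Longrightarrow> (a, w) \<in> Es\<^sup>*"
  by (metis tranclD2 parent_unique)

lemma descendant_less_right_sibling:
  assumes wa: "(w, a) \<in> Es" and wb: "(w, b) \<in> Es" and "a < b"
    and ai: "(a, i) \<in> Es\<^sup>*" and "i \<in> Vs"
  shows "i < b"
proof (rule ccontr)
  assume "\<not> i < b"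
  moreover have "a \<in> Vs" "b \<in> Vs" using wa wb edges_subset by auto
  ultimately have "(a, b) \<in> Es\<^sup>*"
    using subtree_contiguous[OF _ \<open>i \<in> Vs\<close> _ ai] \<open>a < b\<close> by simp
  with \<open>a < b\<close> have "(a, b) \<in> Es\<^sup>+" by (auto simp: rtrancl_eq_or_trancl)
  then have "a \<le> w" using trancl_through_parent wb rtrancl_le by blast
  with wa show False using edge_less by fastforce
qed

definition ancestor_closed :: "nat set \<Rightarrow> bool" where
  "ancestor_closed V \<longleftrightarrow> (\<forall>b\<in>V. \<forall>a. (a, b) \<in> Es \<longrightarrow> a \<in> V)"

lemma ancestor_closed_rtrancl:
  assumes "ancestor_closed V" and "(a, b) \<in> Es\<^sup>*" and "b \<in> V"
  shows "a \<in> V"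
  using assms(2,3) by (induction rule: converse_rtrancl_induct)
    (use assms(1) in \<open>auto simp: ancestor_closed_def\<close>)

lemma descendant_less_nxt:
  assumes V: "V \<subseteq> Vs" and E: "E \<subseteq> Es" and ui: "(u, i) \<in> Es\<^sup>*" and "i \<in> Vs"
  shows "i < nxt n V E u"
proof -
  define A where "A = {a\<in>V. (a, u) \<in> E\<^sup>* \<and> rsibs V E a \<noteq> {}}"
  have "finite V" using V finite_nodes finite_subset by blast
  show ?thesis
  proof (cases "A = {}")
    case True
    then show ?thesis using nodes_le \<open>i \<in> Vs\<close>
      unfolding nxt_def Let_def A_def[symmetric] by auto
  next
    case False
    define a where "a = Max A"
    have "a \<in> A" unfolding a_def using False \<open>finite V\<close> A_def by (intro Max_in) auto
    then have au: "(a, u) \<in> Es\<^sup>*" and "rsibs V E a \<noteq> {}"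
      unfolding A_def using rtrancl_mono[OF E] by auto
    then have "imm_rsib V E a \<in> rsibs V E a" using \<open>finite V\<close> imm_rsib_in_rsibs by blast
    then obtain w where "(w, a) \<in> Es" "(w, imm_rsib V E a) \<in> Es" "a < imm_rsib V E a"
      unfolding rsibs_def using E by blast
    then have "i < imm_rsib V E a"
      using descendant_less_right_sibling au ui \<open>i \<in> Vs\<close> by (meson rtrancl_trans)
    then show ?thesis using False unfolding nxt_def Let_def A_def[symmetric] a_def by simp
  qed
qed

lemma spec_parent_eq_parent:
  assumes V: "V \<subseteq> Vs" and E: "E \<subseteq> Es" and closed: "ancestor_closed V"
    and "u \<in> V" and ui: "(u, i) \<in> Es" and "i \<in> Vs"
    and no_child: "\<And>c. (u, c) \<in> Es \<Longrightarrow> c \<notin> V"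
  shows "i \<in> ts n V E u" and "spec_parent n V E i = u"
proof -
  have "u < i" "i < nxt n V E u" using edge_less descendant_less_nxt[OF V E _ \<open>i \<in> Vs\<close>] ui by auto
  then show its: "i \<in> ts n V E u" unfolding ts_def by simp
  have "j \<le> u" if "j \<in> V" "i \<in> ts n V E j" for j
  proof (rule ccontr)
    assume "\<not> j \<le> u"
    moreover have "j \<le> i" using that(2) unfolding ts_def by simp
    moreover have "u \<in> Vs" "j \<in> Vs" using \<open>u \<in> V\<close> \<open>j \<in> V\<close> V by auto
    ultimately have "(u, j) \<in> Es\<^sup>+"
      using subtree_contiguous[OF _ \<open>i \<in> Vs\<close>, of u j] ui by (auto simp: rtrancl_eq_or_trancl)
    then obtain c where "(u, c) \<in> Es" "(c, j) \<in> Es\<^sup>*" by (auto dest: tranclD)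
    then show False using ancestor_closed_rtrancl[OF closed] \<open>j \<in> V\<close> no_child by blast
  qed
  moreover have "finite V" using V finite_nodes finite_subset by blast
  ultimately show "spec_parent n V E i = u"
    unfolding spec_parent_def using its \<open>u \<in> V\<close> by (intro Max_eqI) auto
qed

end

locale well_formatted_sht = candidate_sht +
  fixes p :: "nat \<Rightarrow> 'q"
  assumes well_formatted: "well_formatted p Vs Es"
begin

lemma siblings_same_pattern: "(u, a) \<in> Es \<Longrightarrow> (u, b) \<in> Es \<Longrightarrow> p a = p b"
  using well_formatted unfolding well_formatted_def by blast

lemma same_pattern_vispre:
  "a \<in> Vs \<Longrightarrow> b \<in> Vs \<Longrightarrow> p a = p b \<Longrightarrow> vispre p Es a = vispre p Es b"
  using well_formatted unfolding well_formatted_def by blast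

lemma vispre_root: "vispre p Es 1 = []"
proof -
  have "{a. (a, 1) \<in> Es\<^sup>+} = {}" using no_edge_to_root by (auto dest: tranclD2)
  then show ?thesis unfolding vispre_def by simp
qed

lemma vispre_last_parent:
  assumes uv: "(u, v) \<in> Es"
  shows "vispre p Es v \<noteq> [] \<and> last (vispre p Es v) = p u"
proof -
  define S where "S = {a. (a, v) \<in> Es\<^sup>+}"
  have "S \<subseteq> Vs" unfolding S_def using edges_subset by (auto dest!: tranclD)
  then have "finite S" using finite_nodes finite_subset by blast
  moreover have "u \<in> S" unfolding S_def using uv by blast
  moreover have "a \<le> u" if "a \<in> S" for a
    using that trancl_through_parent[OF _ uv] rtrancl_le unfolding S_def by blast
  ultimately have "last (sorted_list_of_set S) = u" "sorted_list_of_set S \<noteq> []"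
    using last_sorted_list_of_set_eq by auto
  then show ?thesis unfolding vispre_def S_def[symmetric] by (simp add: last_map)
qed

lemma same_pattern_as_root:
  assumes "a \<in> Vs" "p a = p 1"
  shows "a = 1"
proof (rule ccontr)
  assume "a \<noteq> 1"
  then obtain u where "(u, a) \<in> Es" using parent_exists \<open>a \<in> Vs\<close> by blast
  then have "vispre p Es a \<noteq> []" using vispre_last_parent by blast
  moreover have "vispre p Es a = vispre p Es 1" using same_pattern_vispre root_node assms by blast
  ultimately show False using vispre_root by simp
qed

lemma same_pattern_parents:
  assumes "a \<in> Vs" "b \<in> Vs" "p a = p b" "(u, a) \<in> Es" "(w, b) \<in> Es"
  shows "p u = p w"
proof -
  have "vispre p Es a = vispre p Es b" using assms(1-3) by (rule same_pattern_vispre)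
  then show ?thesis using vispre_last_parent[OF assms(4)] vispre_last_parent[OF assms(5)] by simp
qed

definition construction_state :: "nat set \<Rightarrow> nat set \<Rightarrow> (nat \<times> nat) set \<Rightarrow> bool" where
  "construction_state R V E \<longleftrightarrow>
     V \<subseteq> Vs \<and> R = Vs - V \<and> E = {(a, b) \<in> Es. b \<in> V} \<and> ancestor_closed V \<and>
     (\<forall>a\<in>V. \<forall>b\<in>Vs. p a = p b \<longrightarrow> b \<in> V)"

lemma cluster_parent_processed:
  assumes state: "construction_state R V E"
    and "i \<in> R" "p i = p (Min R)" and ui: "(u, i) \<in> Es"
  shows "u \<in> V" and "\<And>c. (u, c) \<in> Es \<Longrightarrow> c \<notin> V"
proof -
  have R: "R = Vs - V" and pattern_closed: "\<And>a b. a \<in> V \<Longrightarrow> b \<in> Vs \<Longrightarrow> p a = p b \<Longrightarrow> b \<in> V"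
    using state unfolding construction_state_def by simp_all
  have "finite R" using R finite_nodes by simp
  define m where "m = Min R"
  have "m \<in> R" unfolding m_def using \<open>finite R\<close> \<open>i \<in> R\<close> by (intro Min_in) auto
  have "i \<in> Vs" "m \<in> Vs" "u \<in> Vs" using \<open>i \<in> R\<close> \<open>m \<in> R\<close> R ui edges_subset by auto
  have "p i = p m" using \<open>p i = p (Min R)\<close> m_def by simp
  have "i \<noteq> 1" using ui no_edge_to_root by blast
  then have "m \<noteq> 1" using same_pattern_as_root \<open>i \<in> Vs\<close> \<open>p i = p m\<close> by auto
  then obtain w where wm: "(w, m) \<in> Es" using parent_exists \<open>m \<in> Vs\<close> by blast
  have "w \<notin> R"
  proof
    assume "w \<in> R"
    then have "m \<le> w" unfolding m_def using \<open>finite R\<close> by simp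
    with edge_less[OF wm] show False by simp
  qed
  then have "w \<in> V" using wm edges_subset R by blast
  moreover have "p w = p u"
    using same_pattern_parents[OF \<open>i \<in> Vs\<close> \<open>m \<in> Vs\<close> \<open>p i = p m\<close> ui wm] by simp
  ultimately show "u \<in> V" using pattern_closed \<open>u \<in> Vs\<close> by blast
  show "c \<notin> V" if "(u, c) \<in> Es" for c
  proof
    assume "c \<in> V"
    then have "i \<in> V" using pattern_closed siblings_same_pattern[OF that ui] \<open>i \<in> Vs\<close> by blast
    with \<open>i \<in> R\<close> R show False by blast
  qed
qed

lemma cluster_edges:
  assumes state: "construction_state R V E" and C: "C = {i\<in>R. p i = p (Min R)}"
  shows "{(spec_parent n V E i, i) | i. i \<in> C \<and> (\<exists>j\<in>V. i \<in> ts n V E j)} = {(a, b) \<in> Es. b \<in> C}"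
proof -
  have V: "V \<subseteq> Vs" and R: "R = Vs - V" and E: "E \<subseteq> Es" and closed: "ancestor_closed V"
    using state unfolding construction_state_def by auto
  have parent: "u \<in> V \<and> i \<in> ts n V E u \<and> spec_parent n V E i = u"
    if "i \<in> C" and ui: "(u, i) \<in> Es" for i u
  proof -
    have "i \<in> R" "p i = p (Min R)" "i \<in> Vs" using \<open>i \<in> C\<close> C R by auto
    note processed = cluster_parent_processed[OF state this(1,2) ui]
    show ?thesis using spec_parent_eq_parent[OF V E closed processed(1) ui \<open>i \<in> Vs\<close> processed(2)]
      processed(1) by simp
  qed
  show ?thesis
  proof (intro equalityI subsetI)
    fix x assume "x \<in> {(spec_parent n V E i, i) | i. i \<in> C \<and> (\<exists>j\<in>V. i \<in> ts n V E j)}"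
    then obtain i j where x: "x = (spec_parent n V E i, i)" and "i \<in> C" "j \<in> V" by blast
    then have "1 \<in> V" using ancestor_closed_rtrancl[OF closed root_reaches] V by blast
    then have "i \<in> Vs" "i \<noteq> 1" using \<open>i \<in> C\<close> C R by auto
    then obtain u where "(u, i) \<in> Es" using parent_exists by blast
    with parent[OF \<open>i \<in> C\<close> this] show "x \<in> {(a, b) \<in> Es. b \<in> C}" using x \<open>i \<in> C\<close> by simp
  next
    fix x assume "x \<in> {(a, b) \<in> Es. b \<in> C}"
    then obtain a b where x: "x = (a, b)" and ab: "(a, b) \<in> Es" and "b \<in> C" by blast
    with parent[OF \<open>b \<in> C\<close> ab]
    show "x \<in> {(spec_parent n V E i, i) | i. i \<in> C \<and> (\<exists>j\<in>V. i \<in> ts n V E j)}" by auto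
  qed
qed

lemma gen_step_construction_state:
  assumes state: "construction_state R V E" and "R \<noteq> {}"
  obtains R' V' E' where "gen_step n p (R, V, E) = (R', V', E')"
    and "construction_state R' V' E'" and "R' \<subset> R"
proof -
  define C where "C = {i\<in>R. p i = p (Min R)}"
  have R: "R = Vs - V" and E: "E = {(a, b) \<in> Es. b \<in> V}"
    using state unfolding construction_state_def by simp_all
  have "finite R" using R finite_nodes by simp
  then have "Min R \<in> C" unfolding C_def using \<open>R \<noteq> {}\<close> by (simp add: Min_in)
  have "gen_step n p (R, V, E) =
      (R - C, V \<union> C, E \<union> {(spec_parent n V E i, i) | i. i \<in> C \<and> (\<exists>j\<in>V. i \<in> ts n V E j)})"
    using \<open>R \<noteq> {}\<close> unfolding gen_step_def C_def Let_def by simp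
  also have "\<dots> = (R - C, V \<union> C, {(a, b) \<in> Es. b \<in> V \<union> C})"
    unfolding cluster_edges[OF state C_def] using E by auto
  finally have "gen_step n p (R, V, E) = (R - C, V \<union> C, {(a, b) \<in> Es. b \<in> V \<union> C})" .
  moreover have "construction_state (R - C) (V \<union> C) {(a, b) \<in> Es. b \<in> V \<union> C}"
  proof -
    have "ancestor_closed (V \<union> C)"
      unfolding ancestor_closed_def
    proof (intro ballI allI impI)
      fix b a assume "b \<in> V \<union> C" "(a, b) \<in> Es"
      then show "a \<in> V \<union> C"
        using state cluster_parent_processed(1)[OF state] unfolding construction_state_def
          ancestor_closed_def C_def by blast
    qed
    then show ?thesis using state R unfolding construction_state_def C_def by auto
  qed
  moreover have "R - C \<subset> R" using \<open>Min R \<in> C\<close> C_def by blast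
  ultimately show thesis using that by blast
qed

lemma construction_complete: "snd ((gen_step n p ^^ card Vs) (Vs, {}, {})) = (Vs, Es)"
proof -
  let ?P = "\<lambda>(R, V, E). construction_state R V E"
  have "?P (gen_step n p s) \<and> fst (gen_step n p s) \<subset> fst s" if "?P s" "fst s \<noteq> {}" for s
  proof -
    obtain R V E where s: "s = (R, V, E)" by (cases s)
    have "construction_state R V E" "R \<noteq> {}" using that unfolding s by auto
    then obtain R' V' E' where "gen_step n p (R, V, E) = (R', V', E')"
      "construction_state R' V' E'" "R' \<subset> R"
      by (rule gen_step_construction_state)
    then show ?thesis unfolding s by simp
  qed
  moreover have "fst s = {} \<Longrightarrow> gen_step n p s = s" for s
    unfolding gen_step_def by (auto split: prod.split)
  moreover have "?P (Vs, {}, {})"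
    unfolding construction_state_def ancestor_closed_def by simp
  ultimately have "?P ((gen_step n p ^^ card Vs) (Vs, {}, {})) \<and>
      fst ((gen_step n p ^^ card Vs) (Vs, {}, {})) = {}"
    using finite_nodes by (intro funpow_exhausts_fst) auto
  then show ?thesis using edges_subset unfolding construction_state_def
    by (auto split: prod.splits)
qed

end

theorem theorem1:
  fixes n :: nat and p :: "nat \<Rightarrow> 'q" and keep :: "'q \<Rightarrow> bool"
    and Vs :: "nat set" and Es :: "(nat \<times> nat) set"
  assumes "candidate_SHT n Vs Es 1"
    and "well_formatted p Vs Es"
    and "header_phrases n p keep = Vs"
  shows "oracle_gen n p keep = (Vs, Es)"
proof -
  interpret well_formatted_sht n Vs Es p using assms(1,2) by unfold_locales
  show ?thesis unfolding oracle_gen_def Let_def assms(3) by (rule construction_complete)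
qed

end
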